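(* Let $A,B,C,D,E,F$ be six points on a rectangular hyperbola $\mathcal{H}$. Suppose that the triangles $ABC$ and $DEF$ are orthologic, and that one of the two orthology centers lies on $\mathcal{H}$. Then the other orthology center also lies on $\mathcal{H}$.
   Context: A rectangular hyperbola is a hyperbola with perpendicular asymptotes. Triangles $ABC$ and $DEF$ are orthologic if the perpendiculars from $D,E,F$ to $BC, CA, AB$ respectively are concurrent; in that case the perpendiculars from $A,B,C$ to $EF, FD, DE$ respectively are also concurrent. The two points of concurrency are called the orthology centers. *)

theory Defs
  imports Complex_Main
begin

type_synonym point = "real \<times> real"

definition dot :: "point \<Rightarrow> point \<Rightarrow> real" where
  "dot p q = fst p * fst q + snd p * snd q"

definition vsub :: "point \<Rightarrow> point \<Rightarrow> point" where
  "vsub p q = (fst p - fst q, snd p - snd q)"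

definition triangle :: "point \<Rightarrow> point \<Rightarrow> point \<Rightarrow> bool" where
  "triangle A B C \<longleftrightarrow>
     (fst B - fst A) * (snd C - snd A) - (snd B - snd A) * (fst C - fst A) \<noteq> 0"

definition conic :: "real \<Rightarrow> real \<Rightarrow> real \<Rightarrow> real \<Rightarrow> real \<Rightarrow> real \<Rightarrow> point set" where
  "conic a b c d e f = {(x, y). a * x^2 + b * x * y + c * y^2 + d * x + e * y + f = 0}"

text \<open>Determinant of the symmetric matrix of the conic (non-zero iff non-degenerate).\<close>
definition conic_det :: "real \<Rightarrow> real \<Rightarrow> real \<Rightarrow> real \<Rightarrow> real \<Rightarrow> real \<Rightarrow> real" where
  "conic_det a b c d e f =
     a * (c * f - (e/2)^2) - (b/2) * ((b/2) * f - (e/2) * (d/2))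
     + (d/2) * ((b/2) * (e/2) - c * (d/2))"

text \<open>A rectangular hyperbola: a non-degenerate conic which is a hyperbola
  (discriminant b^2 - 4ac > 0) with perpendicular asymptotes (a + c = 0).\<close>
definition rect_hyperbola :: "point set \<Rightarrow> bool" where
  "rect_hyperbola H \<longleftrightarrow> (\<exists>a b c d e f. H = conic a b c d e f \<and>
      a + c = 0 \<and> b^2 - 4 * a * c > 0 \<and> conic_det a b c d e f \<noteq> 0)"

definition orthology_center :: "point \<Rightarrow> point \<Rightarrow> point \<Rightarrow> point \<Rightarrow> point \<Rightarrow> point \<Rightarrow> point \<Rightarrow> bool" where
  "orthology_center A B C D E F P \<longleftrightarrow>
     dot (vsub P D) (vsub C B) = 0 \<and>
     dot (vsub P E) (vsub A C) = 0 \<and>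
     dot (vsub P F) (vsub B A) = 0"

definition orthologic :: "point \<Rightarrow> point \<Rightarrow> point \<Rightarrow> point \<Rightarrow> point \<Rightarrow> point \<Rightarrow> bool" where
  "orthologic A B C D E F \<longleftrightarrow> (\<exists>P. orthology_center A B C D E F P)"

end

theory Submission imports Defs begin

text \<open>A similarity (rotation, scaling, translation) carries any rectangular hyperbola onto
  a hyperbola x y = k with k \<noteq> 0, and preserves orthology centres, so it suffices to treat
  x y = k. Parametrise it by s \<mapsto> (s, k/s). The chords s u and v w are perpendicular iff
  s u v w = -k^2. Hence if the first centre (t, k/t) lies on the hyperbola, then for each of
  D, E, F either t equals its parameter or t d b c = t e c a = t f a b = -k^2, and in
  every case two of the products a e f, b f d, c d e coincide, say a e f = b f d = m.
  The point of parameter -k^2/m then lies on the perpendiculars from A to EF and from B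
  to FD, whose intersection is the second centre.\<close>

definition hpt :: "real \<Rightarrow> real \<Rightarrow> point" where
  "hpt k s = (s, k / s)"

lemma dot_vsub_hpt:
  assumes "s \<noteq> 0" "u \<noteq> 0" "v \<noteq> 0" "w \<noteq> 0"
  shows "dot (vsub (hpt k s) (hpt k u)) (vsub (hpt k w) (hpt k v))
           = (s - u) * (w - v) * (1 + k^2 / (s * u * v * w))"
  using assms unfolding hpt_def dot_def vsub_def by (simp add: field_simps power2_eq_square)

lemma hpt_chords_orthogonal:
  assumes "s \<noteq> 0" "u \<noteq> 0" "v \<noteq> 0" "w \<noteq> 0" "s * u * v * w = - (k^2)"
  shows "dot (vsub (hpt k s) (hpt k u)) (vsub (hpt k w) (hpt k v)) = 0"
proof -
  have "s * u * v * w \<noteq> 0"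
    using assms(1-4) by simp
  then have "k^2 \<noteq> 0"
    using assms(5) by simp
  then have "1 + k^2 / (s * u * v * w) = 0"
    using assms(5) by simp
  then show ?thesis
    using dot_vsub_hpt[OF assms(1-4)] by simp
qed

lemma hpt_chords_orthogonalD:
  assumes "s \<noteq> 0" "u \<noteq> 0" "v \<noteq> 0" "w \<noteq> 0" "w \<noteq> v"
    and "dot (vsub (hpt k s) (hpt k u)) (vsub (hpt k w) (hpt k v)) = 0"
  shows "s = u \<or> s * u * v * w = - (k^2)"
proof -
  have "(s - u) * (w - v) * (1 + k^2 / (s * u * v * w)) = 0"
    using dot_vsub_hpt[OF assms(1-4)] assms(6) by simp
  then have "s = u \<or> 1 + k^2 / (s * u * v * w) = 0"
    using assms(5) by simp
  then show ?thesis
    using assms(1-4) by (auto simp: field_simps)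
qed

lemma orthogonal_to_independent_eq:
  assumes "dot (vsub P X) U = 0" "dot (vsub P Y) V = 0"
    and "dot (vsub Q X) U = 0" "dot (vsub Q Y) V = 0"
    and "fst U * snd V \<noteq> snd U * fst V"
  shows "P = Q"
proof -
  obtain x y where xy: "vsub P Q = (x, y)" by (cases "vsub P Q")
  have "x * fst U + y * snd U = 0" "x * fst V + y * snd V = 0"
    using assms(1-4) xy unfolding dot_def vsub_def by (auto simp: algebra_simps)
  then have "(fst U * snd V - snd U * fst V) * x = 0" "(fst U * snd V - snd U * fst V) * y = 0"
    by algebra+
  then have "x = 0" "y = 0"
    using assms(5) by auto
  then show ?thesis
    using xy unfolding vsub_def by (simp add: prod_eq_iff)
qed

lemma two_of_three_products_eq:
  fixes t a b c d e f m :: real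
  assumes "t \<noteq> 0" "a \<noteq> 0" "b \<noteq> 0" "c \<noteq> 0" "distinct [d, e, f]"
    and "t = d \<or> t * d * b * c = m" "t = e \<or> t * e * c * a = m" "t = f \<or> t * f * a * b = m"
  shows "a * e * f = b * f * d \<or> b * f * d = c * d * e \<or> c * d * e = a * e * f"
proof -
  consider "t = d" | "t = e" | "t = f" | "t * d * b * c = m" "t * e * c * a = m" "t * f * a * b = m"
    using assms(6-8) by blast
  then show ?thesis
  proof cases
    case 1
    then have "(t * a) * (e * c) = (t * a) * (f * b)"
      using assms(5-8) by (auto simp: ac_simps)
    then show ?thesis
      using assms(1,2) by (simp add: ac_simps)
  next
    case 2
    then have "(t * b) * (d * c) = (t * b) * (f * a)"
      using assms(5-8) by (auto simp: ac_simps)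
    then show ?thesis
      using assms(1,3) by (simp add: ac_simps)
  next
    case 3
    then have "(t * c) * (d * b) = (t * c) * (e * a)"
      using assms(5-8) by (auto simp: ac_simps)
    then show ?thesis
      using assms(1,4) by (simp add: ac_simps)
  next
    case 4
    then have "(t * c) * (d * b) = (t * c) * (e * a)"
      by (simp add: ac_simps)
    then show ?thesis
      using assms(1,4) by (simp add: ac_simps)
  qed
qed

lemma orthogonals_meet_on_hyperbola:
  fixes k a b d e f :: real
  assumes "k \<noteq> 0" "a \<noteq> 0" "b \<noteq> 0" "d \<noteq> 0" "e \<noteq> 0" "f \<noteq> 0" "distinct [d, e, f]"
    and "a * e * f = b * f * d"
    and "dot (vsub Q (hpt k a)) (vsub (hpt k f) (hpt k e)) = 0"
    and "dot (vsub Q (hpt k b)) (vsub (hpt k d) (hpt k f)) = 0"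
  shows "fst Q * snd Q = k"
proof -
  define s where "s = - (k^2) / (a * e * f)"
  have "s \<noteq> 0"
    using assms(1-6) by (simp add: s_def)
  have "s * a * e * f = - (k^2)" "s * b * f * d = - (k^2)"
    using assms(2-6,8) by (simp_all add: s_def field_simps)
  then have "dot (vsub (hpt k s) (hpt k a)) (vsub (hpt k f) (hpt k e)) = 0"
    "dot (vsub (hpt k s) (hpt k b)) (vsub (hpt k d) (hpt k f)) = 0"
    using hpt_chords_orthogonal \<open>s \<noteq> 0\<close> assms(2-6) by blast+
  moreover have "fst (vsub (hpt k f) (hpt k e)) * snd (vsub (hpt k d) (hpt k f))
      \<noteq> snd (vsub (hpt k f) (hpt k e)) * fst (vsub (hpt k d) (hpt k f))"
  proof -
    have "fst (vsub (hpt k f) (hpt k e)) * snd (vsub (hpt k d) (hpt k f))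
        - snd (vsub (hpt k f) (hpt k e)) * fst (vsub (hpt k d) (hpt k f))
        = k * (f - e) * (f - d) * (e - d) / (d * e * f)"
      using assms(4-6) unfolding hpt_def vsub_def by (simp add: field_simps)
    then show ?thesis
      using assms(1,4-7) by auto
  qed
  ultimately have "Q = hpt k s"
    using orthogonal_to_independent_eq assms(9,10) by blast
  then show ?thesis
    using \<open>s \<noteq> 0\<close> by (simp add: hpt_def)
qed

lemma xy_hyperbola_hpt:
  assumes "k \<noteq> 0" "fst X * snd X = k"
  shows "fst X \<noteq> 0" "hpt k (fst X) = X"
proof -
  show "fst X \<noteq> 0"
    using assms by auto
  then show "hpt k (fst X) = X"
    using assms(2) by (cases X) (auto simp: hpt_def field_simps)
qed

lemma orthology_center_on_xy_hyperbola:
  assumes "k \<noteq> 0" and on_hyp: "\<forall>X\<in>{A, B, C, D, E, F, P}. fst X * snd X = k"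
    and "distinct [A, B, C, D, E, F]"
    and "orthology_center A B C D E F P" "orthology_center D E F A B C Q"
  shows "fst Q * snd Q = k"
proof -
  have param: "fst X \<noteq> 0" "hpt k (fst X) = X" if "X \<in> {A, B, C, D, E, F, P}" for X
    using xy_hyperbola_hpt[OF \<open>k \<noteq> 0\<close>] on_hyp that by blast+
  define a b c d e f t where "a = fst A" "b = fst B" "c = fst C" "d = fst D" "e = fst E"
    "f = fst F" "t = fst P"
  then have nz: "a \<noteq> 0" "b \<noteq> 0" "c \<noteq> 0" "d \<noteq> 0" "e \<noteq> 0" "f \<noteq> 0" "t \<noteq> 0"
    and pts: "A = hpt k a" "B = hpt k b" "C = hpt k c" "D = hpt k d" "E = hpt k e" "F = hpt k f"
      "P = hpt k t"
    using param by simp_all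
  have dist: "distinct [a, b, c, d, e, f]"
    using assms(3) unfolding pts by auto
  have "dot (vsub (hpt k t) (hpt k d)) (vsub (hpt k c) (hpt k b)) = 0"
    "dot (vsub (hpt k t) (hpt k e)) (vsub (hpt k a) (hpt k c)) = 0"
    "dot (vsub (hpt k t) (hpt k f)) (vsub (hpt k b) (hpt k a)) = 0"
    using assms(4) unfolding pts orthology_center_def by auto
  then have "t = d \<or> t * d * b * c = - (k^2)" "t = e \<or> t * e * c * a = - (k^2)"
    "t = f \<or> t * f * a * b = - (k^2)"
    using hpt_chords_orthogonalD nz dist by (metis distinct_length_2_or_more)+
  then have "a * e * f = b * f * d \<or> b * f * d = c * d * e \<or> c * d * e = a * e * f"
    using two_of_three_products_eq[OF nz(7,1,2,3)] dist by simp
  moreover have "dot (vsub Q (hpt k a)) (vsub (hpt k f) (hpt k e)) = 0"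
    "dot (vsub Q (hpt k b)) (vsub (hpt k d) (hpt k f)) = 0"
    "dot (vsub Q (hpt k c)) (vsub (hpt k e) (hpt k d)) = 0"
    using assms(5) unfolding pts orthology_center_def by auto
  moreover have "distinct [d, e, f]" "distinct [e, f, d]" "distinct [f, d, e]"
    using dist by auto
  ultimately show ?thesis
    using orthogonals_meet_on_hyperbola[OF \<open>k \<noteq> 0\<close> nz(1,2,4,5,6)]
      orthogonals_meet_on_hyperbola[OF \<open>k \<noteq> 0\<close> nz(2,3,5,6,4)]
      orthogonals_meet_on_hyperbola[OF \<open>k \<noteq> 0\<close> nz(3,1,6,4,5)]
    by blast
qed

definition similarity :: "(point \<Rightarrow> point) \<Rightarrow> bool" where
  "similarity T \<longleftrightarrow> (\<exists>n > 0. \<forall>X Y Z W.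
     dot (vsub (T X) (T Y)) (vsub (T Z) (T W)) = n * dot (vsub X Y) (vsub Z W))"

lemma similarity_inj:
  assumes "similarity T"
  shows "inj T"
proof (rule injI)
  fix X Y
  assume "T X = T Y"
  obtain n where "n > 0" "dot (vsub (T X) (T Y)) (vsub (T X) (T Y)) = n * dot (vsub X Y) (vsub X Y)"
    using assms unfolding similarity_def by blast
  with \<open>T X = T Y\<close> have "(fst X - fst Y)^2 + (snd X - snd Y)^2 = 0"
    unfolding dot_def vsub_def by (simp add: power2_eq_square)
  then show "X = Y"
    by (simp add: prod_eq_iff)
qed

lemma orthology_center_similarity:
  assumes "similarity T" "orthology_center A B C D E F P"
  shows "orthology_center (T A) (T B) (T C) (T D) (T E) (T F) (T P)"
proof -
  obtain n where "\<And>X Y Z W.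
      dot (vsub (T X) (T Y)) (vsub (T Z) (T W)) = n * dot (vsub X Y) (vsub Z W)"
    using assms(1) unfolding similarity_def by blast
  then show ?thesis
    using assms(2) unfolding orthology_center_def by simp
qed

lemma complex_sqrt_parts:
  fixes x y :: real
  obtains p q where "p^2 - q^2 = x" "2 * p * q = y"
proof
  define z where "z = csqrt (Complex x y)"
  have "z^2 = Complex x y"
    unfolding z_def by (rule power2_csqrt)
  then show "Re z ^ 2 - Im z ^ 2 = x" "2 * Re z * Im z = y"
    by (simp_all add: power2_eq_square complex_eq_iff ac_simps)
qed

lemma rect_hyperbola_similar_xy_hyperbola:
  assumes "rect_hyperbola H"
  obtains T k where "similarity T" "k \<noteq> 0" "\<And>X. X \<in> H \<longleftrightarrow> fst (T X) * snd (T X) = k"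
proof -
  obtain a b c d e f where H: "H = conic a b c d e f" and "c = - a"
    and disc: "b^2 - 4 * a * c > 0" and det: "conic_det a b c d e f \<noteq> 0"
    using assms unfolding rect_hyperbola_def by (metis add_eq_0_iff)
  obtain p q where b: "b = p^2 - q^2" and "2 * p * q = - 2 * a"
    by (metis complex_sqrt_parts)
  then have a: "a = - p * q"
    by simp
  define n where "n = p^2 + q^2"
  have "n > 0"
  proof -
    have "p \<noteq> 0 \<or> q \<noteq> 0"
      using disc unfolding a b \<open>c = - a\<close> by auto
    then show ?thesis
      unfolding n_def by (simp add: sum_power2_gt_zero_iff)
  qed
  define \<alpha> where "\<alpha> = (d * p + e * q) / n"
  define \<beta> where "\<beta> = (e * p - d * q) / n"
  define k where "k = \<alpha> * \<beta> - f"
  text \<open>Since (p + i q)^2 = b - 2 i a, the quadratic part of the product of the coordinates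
    of T (x, y) is a x^2 + b x y - a y^2; the translation (\<beta>, \<alpha>) matches the linear part.\<close>
  define T where "T X = (p * fst X + q * snd X + \<beta>, - q * fst X + p * snd X + \<alpha>)" for X :: point
  have "similarity T"
    unfolding similarity_def
  proof (intro exI conjI allI)
    show "n > 0" by fact
    show "dot (vsub (T X) (T Y)) (vsub (T Z) (T W)) = n * dot (vsub X Y) (vsub Z W)" for X Y Z W
      unfolding T_def dot_def vsub_def n_def by (simp add: algebra_simps power2_eq_square)
  qed
  moreover have "conic_det a b c d e f = n^2 * k / 4"
    unfolding conic_det_def k_def \<alpha>_def \<beta>_def \<open>c = - a\<close> a b using \<open>n > 0\<close>
    by (simp add: field_simps) (simp add: n_def algebra_simps power2_eq_square eval_nat_numeral)
  then have "k \<noteq> 0"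
    using det by auto
  moreover have "X \<in> H \<longleftrightarrow> fst (T X) * snd (T X) = k" for X
  proof -
    obtain x y where X: "X = (x, y)" by (cases X)
    have "fst (T X) * snd (T X) - k = a * x^2 + b * x * y + c * y^2 + d * x + e * y + f"
      unfolding X T_def k_def \<alpha>_def \<beta>_def \<open>c = - a\<close> a b using \<open>n > 0\<close>
      by (simp add: field_simps) (simp add: n_def algebra_simps power2_eq_square)
    then show ?thesis
      unfolding H conic_def X by auto
  qed
  ultimately show ?thesis
    using that by blast
qed

theorem proposition2p6:
  fixes A B C D E F P Q :: point and H :: "point set"
  assumes "rect_hyperbola H"
    and "A \<in> H" "B \<in> H" "C \<in> H" "D \<in> H" "E \<in> H" "F \<in> H"
    and "distinct [A, B, C, D, E, F]"
    and "triangle A B C" "triangle D E F"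
    and "orthologic A B C D E F"
    and "orthology_center A B C D E F P"
    and "orthology_center D E F A B C Q"
  shows "P \<in> H \<longleftrightarrow> Q \<in> H"
proof -
  obtain T k where T: "similarity T" and "k \<noteq> 0"
    and H: "\<And>X. X \<in> H \<longleftrightarrow> fst (T X) * snd (T X) = k"
    using rect_hyperbola_similar_xy_hyperbola[OF assms(1)] by blast
  have vertices: "\<forall>X\<in>{T A, T B, T C, T D, T E, T F}. fst X * snd X = k"
    using assms(2-7) H by blast
  have distinct: "distinct [T A, T B, T C, T D, T E, T F]"
    using assms(8) similarity_inj[OF T] by (simp add: inj_eq)
  have centers: "orthology_center (T A) (T B) (T C) (T D) (T E) (T F) (T P)"
    "orthology_center (T D) (T E) (T F) (T A) (T B) (T C) (T Q)"
    using assms(12,13) by (simp_all add: orthology_center_similarity T)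
  show ?thesis
  proof
    assume "P \<in> H"
    then show "Q \<in> H"
      using orthology_center_on_xy_hyperbola[OF \<open>k \<noteq> 0\<close> _ distinct centers] vertices H
      by simp
  next
    assume "Q \<in> H"
    moreover have "distinct [T D, T E, T F, T A, T B, T C]"
      using distinct by auto
    ultimately show "P \<in> H"
      using orthology_center_on_xy_hyperbola[OF \<open>k \<noteq> 0\<close> _ _ centers(2,1)] vertices H
      by simp
  qed
qed

end
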